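(* Let $S=\mathbb{K}[x_1,\dots,x_n]$ be a polynomial ring over a field $\mathbb{K}$. Let $\mathcal{C}=(V,E)$ be a clutter with $V\subseteq\{x_1,\dots,x_n\}$, and let $\mathcal{C}'=(V,E')$ be the clutter obtained from $\mathcal{C}$ by removing all edges that contain a free vertex. Let $\beta(\mathcal{C}')$ be the matching number of $\mathcal{C}'$. Then \[ \operatorname{sreg}(S/I(\mathcal{C}))\le |V|-|E|+|E'|-\beta(\mathcal{C}'). \]
   Context: A clutter $\mathcal{C}=(V,E)$ consists of a finite vertex set $V$ and a collection $E$ of subsets of $V$ (edges), no edge containing another; vertices are identified with variables and $I(\mathcal{C})=(\prod_{x\in e}x : e\in E)\subset S$ is the edge ideal. An edge $e$ contains a free vertex if some $x\in e$ belongs to no other edge of $\mathcal{C}$. A matching is a set of pairwise disjoint edges; the matching number is the maximum size of a matching. Stanley regularity: for a squarefree monomial ideal $I\subset S$, a squarefree Stanley decomposition of $S/I$ is a decomposition $S/I=\bigoplus_{i=1}^r u_i\mathbb{K}[Z_i]$ as $\mathbb{K}$-vector spaces, where $Z_i\subseteq\{x_1,\dots,x_n\}$, $u_i$ are (images of) squarefree monomials with $\operatorname{supp}(u_i)\subseteq Z_i$, and each $u_i\mathbb{K}[Z_i]$ is the $\mathbb{K}$-span of $u_iv$, $v$ a monomial of $\mathbb{K}[Z_i]$, free over $\mathbb{K}[Z_i]$. Its Stanley regularity is $\max_i\deg(u_i)$, and $\operatorname{sreg}(S/I)$ is the minimum of this over all such decompositions. *)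

theory Defs
  imports Main
begin

definition clutter :: "'a set \<Rightarrow> 'a set set \<Rightarrow> bool" where
  "clutter V E \<longleftrightarrow> finite V \<and> (\<forall>e\<in>E. e \<subseteq> V \<and> e \<noteq> {}) \<and>
     (\<forall>e\<in>E. \<forall>f\<in>E. e \<subseteq> f \<longrightarrow> e = f)"

definition free_vertex :: "'a set set \<Rightarrow> 'a set \<Rightarrow> 'a \<Rightarrow> bool" where
  "free_vertex E e x \<longleftrightarrow> x \<in> e \<and> (\<forall>f\<in>E. x \<in> f \<longrightarrow> f = e)"

definition has_free_vertex :: "'a set set \<Rightarrow> 'a set \<Rightarrow> bool" where
  "has_free_vertex E e \<longleftrightarrow> (\<exists>x. free_vertex E e x)"

definition remove_free_edges :: "'a set set \<Rightarrow> 'a set set" where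
  "remove_free_edges E = {e\<in>E. \<not> has_free_vertex E e}"

definition matching :: "'a set set \<Rightarrow> 'a set set \<Rightarrow> bool" where
  "matching E M \<longleftrightarrow> M \<subseteq> E \<and> (\<forall>e\<in>M. \<forall>f\<in>M. e \<noteq> f \<longrightarrow> e \<inter> f = {})"

definition matching_number :: "'a set set \<Rightarrow> nat" where
  "matching_number E = Max {card M | M. matching E M}"

(* Monomials in the variables X: exponent vectors 'a \<Rightarrow> nat vanishing outside X. *)
definition monomials :: "'a set \<Rightarrow> ('a \<Rightarrow> nat) set" where
  "monomials X = {m. \<forall>x. x \<notin> X \<longrightarrow> m x = 0}"

(* m lies in the edge ideal I(C) iff some edge monomial divides m *)
definition in_edge_ideal :: "'a set set \<Rightarrow> ('a \<Rightarrow> nat) \<Rightarrow> bool" where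
  "in_edge_ideal E m \<longleftrightarrow> (\<exists>e\<in>E. \<forall>x\<in>e. 0 < m x)"

(* standard monomials: their images form a K-basis of S/I(C) *)
definition std_monomials :: "'a set \<Rightarrow> 'a set set \<Rightarrow> ('a \<Rightarrow> nat) set" where
  "std_monomials X E = {m \<in> monomials X. \<not> in_edge_ideal E m}"

(* the monomials u*v, v a monomial in K[Z], u squarefree given by its support *)
definition stanley_piece :: "'a set \<times> 'a set \<Rightarrow> ('a \<Rightarrow> nat) set" where
  "stanley_piece uZ = {m. \<exists>v \<in> monomials (snd uZ). m = (\<lambda>x. (if x \<in> fst uZ then 1 else 0) + v x)}"

(* squarefree Stanley decomposition of S/I(C), S = K[X]: list of pairs (supp u_i, Z_i) *)
definition stanley_decomposition :: "'a set \<Rightarrow> 'a set set \<Rightarrow> ('a set \<times> 'a set) list \<Rightarrow> bool" where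
  "stanley_decomposition X E D \<longleftrightarrow>
     (\<forall>(u, Z) \<in> set D. u \<subseteq> Z \<and> Z \<subseteq> X) \<and>
     (\<forall>i < length D. stanley_piece (D ! i) \<subseteq> std_monomials X E) \<and>
     (\<forall>m \<in> std_monomials X E. \<exists>!i. i < length D \<and> m \<in> stanley_piece (D ! i))"

definition stanley_reg_of :: "('a set \<times> 'a set) list \<Rightarrow> nat" where
  "stanley_reg_of D = Max (insert 0 ((card \<circ> fst) ` set D))"

definition sreg :: "'a set \<Rightarrow> 'a set set \<Rightarrow> nat" where
  "sreg X E = (LEAST k. \<exists>D. stanley_decomposition X E D \<and> stanley_reg_of D = k)"

end

theory Submission
  imports Defs
begin

text \<open>
  The standard monomials span \<open>S/I(C)\<close> and their supports are exactly the independent sets of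
  the clutter, so a squarefree Stanley decomposition amounts to a partition of the independence
  complex into intervals \<open>[a, b]\<close> (the space \<open>x\<^sub>a K[x\<^sub>b]\<close>), of Stanley regularity
  \<open>max |a|\<close>. At a free vertex \<open>y\<close> of an edge \<open>e\<close>,
  the faces not containing \<open>e - {y}\<close> form a cone with apex \<open>y\<close> over the link of \<open>y\<close>,
  and the remaining faces contain \<open>e - {y}\<close> but not \<open>y\<close>; at a vertex of a matching edge
  the complex splits into deletion and link. In each case the edge is used up while every lower
  end misses one more vertex, so all lower ends have at most \<open>|V| - |E - E'| - \<beta>(C')\<close>
  elements; vertices of \<open>X\<close> outside \<open>V\<close> only enlarge the upper ends.
\<close>

section \<open>Interval partitions\<close>

definition interval_partition :: "'a set set \<Rightarrow> ('a set \<times> 'a set) set \<Rightarrow> bool" where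
  "interval_partition T Q \<longleftrightarrow> finite Q \<and>
     (\<forall>a b. (a, b) \<in> Q \<longrightarrow> a \<subseteq> b \<and> {a..b} \<subseteq> T) \<and>
     (\<forall>s \<in> T. \<exists>a b. (a, b) \<in> Q \<and> s \<in> {a..b}) \<and>
     (\<forall>a b a' b' s. (a, b) \<in> Q \<longrightarrow> (a', b') \<in> Q \<longrightarrow> s \<in> {a..b} \<longrightarrow> s \<in> {a'..b'} \<longrightarrow>
        a = a' \<and> b = b')"

lemma interval_partitionI:
  assumes "finite Q" and "\<And>a b. (a, b) \<in> Q \<Longrightarrow> a \<subseteq> b \<and> {a..b} \<subseteq> T"
    and "\<And>s. s \<in> T \<Longrightarrow> \<exists>a b. (a, b) \<in> Q \<and> s \<in> {a..b}"
    and "\<And>a b a' b' s. (a, b) \<in> Q \<Longrightarrow> (a', b') \<in> Q \<Longrightarrow> s \<in> {a..b} \<Longrightarrow> s \<in> {a'..b'} \<Longrightarrow>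
      a = a' \<and> b = b'"
  shows "interval_partition T Q"
  unfolding interval_partition_def using assms by blast

context
  fixes T Q assumes Q: "interval_partition T Q"
begin

lemma interval_partition_finite: "finite Q"
  using Q unfolding interval_partition_def by blast

lemma interval_partition_le: "(a, b) \<in> Q \<Longrightarrow> a \<subseteq> b"
  using Q unfolding interval_partition_def by blast

lemma interval_partition_subset: "(a, b) \<in> Q \<Longrightarrow> {a..b} \<subseteq> T"
  using Q unfolding interval_partition_def by blast

lemma interval_partition_upper_mem: "(a, b) \<in> Q \<Longrightarrow> b \<in> T"
  using interval_partition_le interval_partition_subset by (meson atLeastAtMost_iff order_refl subsetD)

lemma interval_partition_cover: "s \<in> T \<Longrightarrow> \<exists>a b. (a, b) \<in> Q \<and> s \<in> {a..b}"
  using Q unfolding interval_partition_def by blast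

lemma interval_partition_unique:
  "(a, b) \<in> Q \<Longrightarrow> (a', b') \<in> Q \<Longrightarrow> s \<in> {a..b} \<Longrightarrow> s \<in> {a'..b'} \<Longrightarrow> a = a' \<and> b = b'"
  using Q unfolding interval_partition_def by blast

end

lemma interval_partition_empty: "interval_partition {} {}"
  by (rule interval_partitionI) auto

lemma interval_partition_singletons:
  assumes "finite T"
  shows "interval_partition T ((\<lambda>s. (s, s)) ` T)"
  by (rule interval_partitionI) (use assms in auto)

lemma interval_partition_Un:
  assumes Q: "interval_partition T Q" and Q': "interval_partition T' Q'" and "T \<inter> T' = {}"
  shows "interval_partition (T \<union> T') (Q \<union> Q')"
proof (rule interval_partitionI)
  show "finite (Q \<union> Q')"
    using interval_partition_finite[OF Q] interval_partition_finite[OF Q'] by simp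
  show "a \<subseteq> b \<and> {a..b} \<subseteq> T \<union> T'" if "(a, b) \<in> Q \<union> Q'" for a b
    using that interval_partition_le[OF Q] interval_partition_subset[OF Q]
      interval_partition_le[OF Q'] interval_partition_subset[OF Q'] by blast
  show "\<exists>a b. (a, b) \<in> Q \<union> Q' \<and> s \<in> {a..b}" if "s \<in> T \<union> T'" for s
    using that interval_partition_cover[OF Q] interval_partition_cover[OF Q'] by blast
  fix a b a' b' s
  assume p: "(a, b) \<in> Q \<union> Q'" and p': "(a', b') \<in> Q \<union> Q'" and s: "s \<in> {a..b}" "s \<in> {a'..b'}"
  have "(a, b) \<in> Q \<longleftrightarrow> (a', b') \<in> Q"
    using p p' s \<open>T \<inter> T' = {}\<close> interval_partition_subset[OF Q] interval_partition_subset[OF Q']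
    by blast
  then show "a = a' \<and> b = b'"
    using p p' s interval_partition_unique[OF Q] interval_partition_unique[OF Q'] by blast
qed

lemma mem_interval_extend:
  assumes "a \<subseteq> b" "b \<inter> d = {}" "c \<subseteq> d"
  shows "u \<in> {a \<union> c..b \<union> d} \<longleftrightarrow> u - d \<in> {a..b} \<and> c \<subseteq> u"
  using assms by auto

lemma interval_partition_extend:
  assumes Q: "interval_partition T Q" and disj: "\<forall>s\<in>T. s \<inter> d = {}" and "c \<subseteq> d"
  shows "interval_partition {u. u - d \<in> T \<and> c \<subseteq> u} ((\<lambda>(a, b). (a \<union> c, b \<union> d)) ` Q)"
    (is "interval_partition ?T' (?g ` Q)")
proof (rule interval_partitionI)
  have mem: "u \<in> {a \<union> c..b \<union> d} \<longleftrightarrow> u - d \<in> {a..b} \<and> c \<subseteq> u" if "(a, b) \<in> Q" for a b u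
    using interval_partition_le[OF Q that] interval_partition_upper_mem[OF Q that] disj \<open>c \<subseteq> d\<close>
    by (intro mem_interval_extend) auto
  show "finite (?g ` Q)"
    using interval_partition_finite[OF Q] by simp
  show "a \<subseteq> b \<and> {a..b} \<subseteq> ?T'" if ab: "(a, b) \<in> ?g ` Q" for a b
  proof -
    obtain a0 b0 where p: "(a0, b0) \<in> Q" "a = a0 \<union> c" "b = b0 \<union> d"
      using ab by auto
    show ?thesis
      using p mem[OF p(1)] interval_partition_le[OF Q p(1)] interval_partition_subset[OF Q p(1)]
        \<open>c \<subseteq> d\<close> by blast
  qed
  show "\<exists>a b. (a, b) \<in> ?g ` Q \<and> u \<in> {a..b}" if u: "u \<in> ?T'" for u
  proof -
    obtain a b where "(a, b) \<in> Q" "u - d \<in> {a..b}"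
      using u interval_partition_cover[OF Q] by blast
    then show ?thesis
      using u mem by force
  qed
  fix a b a' b' u
  assume "(a, b) \<in> ?g ` Q" "(a', b') \<in> ?g ` Q" and u: "u \<in> {a..b}" "u \<in> {a'..b'}"
  then obtain a0 b0 a0' b0' where p: "(a0, b0) \<in> Q" "a = a0 \<union> c" "b = b0 \<union> d"
    and p': "(a0', b0') \<in> Q" "a' = a0' \<union> c" "b' = b0' \<union> d"
    by auto
  have "a0 = a0' \<and> b0 = b0'"
    using interval_partition_unique[OF Q p(1) p'(1)] u p p' mem[OF p(1)] mem[OF p'(1)] by blast
  then show "a = a' \<and> b = b'"
    using p p' by simp
qed

section \<open>Independence complexes\<close>

definition indep_sets :: "'a set \<Rightarrow> 'a set set \<Rightarrow> 'a set set" where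
  "indep_sets W E = {s. s \<subseteq> W \<and> (\<forall>e\<in>E. \<not> e \<subseteq> s)}"

lemma mem_indep_sets: "s \<in> indep_sets W E \<longleftrightarrow> s \<subseteq> W \<and> (\<forall>e\<in>E. \<not> e \<subseteq> s)"
  unfolding indep_sets_def by simp

lemma indep_sets_empty_edge: "{} \<in> E \<Longrightarrow> indep_sets W E = {}"
  unfolding indep_sets_def by blast

lemma finite_indep_sets: "finite W \<Longrightarrow> finite (indep_sets W E)"
  unfolding indep_sets_def by (simp add: finite_subset[of _ "Pow W"] subset_iff)

lemma indep_sets_delete_iff: "y \<notin> u \<Longrightarrow> u \<in> indep_sets (W - {y}) E \<longleftrightarrow> u \<in> indep_sets W E"
  unfolding mem_indep_sets by auto

lemma indep_sets_link_iff:
  assumes "y \<in> u"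
  shows "u \<in> indep_sets W E \<longleftrightarrow> y \<in> W \<and> u - {y} \<in> indep_sets (W - {y}) ((\<lambda>e. e - {y}) ` E)"
proof -
  have "e \<subseteq> u \<longleftrightarrow> e - {y} \<subseteq> u - {y}" for e
    using assms by auto
  moreover have "u \<subseteq> W \<longleftrightarrow> y \<in> W \<and> u - {y} \<subseteq> W - {y}"
    using assms by auto
  ultimately show ?thesis
    unfolding mem_indep_sets by simp
qed

lemma indep_sets_vertex_split:
  assumes "y \<in> W"
  shows "indep_sets W E =
    indep_sets (W - {y}) E \<union> {u. u - {y} \<in> indep_sets (W - {y}) ((\<lambda>e. e - {y}) ` E) \<and> {y} \<subseteq> u}"
proof (intro set_eqI)
  fix u
  show "u \<in> indep_sets W E \<longleftrightarrow> u \<in> indep_sets (W - {y}) E \<union>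
      {u. u - {y} \<in> indep_sets (W - {y}) ((\<lambda>e. e - {y}) ` E) \<and> {y} \<subseteq> u}"
  proof (cases "y \<in> u")
    case True
    then have "u \<notin> indep_sets (W - {y}) E"
      unfolding mem_indep_sets by blast
    then show ?thesis
      using True assms indep_sets_link_iff[of y u W E] by simp
  next
    case False
    then show ?thesis
      using indep_sets_delete_iff[of y u W E] by simp
  qed
qed

lemma indep_sets_vertex_split_disjoint:
  "indep_sets (W - {y}) E \<inter> {u. u - {y} \<in> indep_sets (W - {y}) E' \<and> {y} \<subseteq> u} = {}"
  unfolding indep_sets_def by auto

lemma indep_sets_link_not_subset:
  assumes "e \<in> E" and "u - {y} \<in> indep_sets W ((\<lambda>f. f - {y}) ` E)"
  shows "\<not> e - {y} \<subseteq> u"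
proof
  assume "e - {y} \<subseteq> u"
  then have "e - {y} \<subseteq> u - {y}" by auto
  moreover have "e - {y} \<in> (\<lambda>f. f - {y}) ` E" using assms(1) by (rule imageI)
  ultimately show False using assms(2) unfolding mem_indep_sets by blast
qed

lemma indep_sets_free_vertex_cone_iff:
  assumes "free_vertex E e y" "y \<in> W" "\<not> e - {y} \<subseteq> u"
  shows "u \<in> indep_sets W E \<longleftrightarrow> u - {y} \<in> indep_sets (W - {y}) ((\<lambda>f. f - {y}) ` E)"
proof -
  have "f \<subseteq> u \<longleftrightarrow> f - {y} \<subseteq> u - {y}" if "f \<in> E" for f
  proof (cases "y \<in> f")
    case True
    then have "f = e" using assms(1) that unfolding free_vertex_def by blast
    then show ?thesis using assms(3) by auto
  qed auto
  moreover have "u \<subseteq> W \<longleftrightarrow> u - {y} \<subseteq> W - {y}"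
    using assms(2) by auto
  ultimately show ?thesis
    unfolding mem_indep_sets by simp
qed

lemma indep_sets_free_vertex_shift_iff:
  assumes "e \<in> E" "y \<in> e" "e \<subseteq> W" "e - {y} \<subseteq> u"
  shows "u \<in> indep_sets W E \<longleftrightarrow>
    u - (e - {y}) \<in> indep_sets (W - e) ((\<lambda>f. f - (e - {y})) ` (E - {e}))"
proof -
  have "f \<subseteq> u \<longleftrightarrow> f - (e - {y}) \<subseteq> u - (e - {y})" for f
    using assms(4) by auto
  moreover have "e \<subseteq> u \<longleftrightarrow> y \<in> u"
    using assms(2,4) by auto
  moreover have "u - (e - {y}) \<subseteq> W - e \<longleftrightarrow> u \<subseteq> W \<and> y \<notin> u"
    using assms(2,3,4) by auto
  moreover have "(\<forall>f\<in>E. \<not> f \<subseteq> u) \<longleftrightarrow> \<not> e \<subseteq> u \<and> (\<forall>f\<in>E - {e}. \<not> f \<subseteq> u)"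
    using assms(1) by auto
  ultimately show ?thesis
    unfolding mem_indep_sets by simp
qed

lemma indep_sets_free_vertex_split:
  assumes "e \<in> E" and "free_vertex E e y" and "e \<subseteq> W"
  shows "indep_sets W E =
    {u. u - {y} \<in> indep_sets (W - {y}) ((\<lambda>f. f - {y}) ` E)} \<union>
    {u. u - (e - {y}) \<in> indep_sets (W - e) ((\<lambda>f. f - (e - {y})) ` (E - {e})) \<and> e - {y} \<subseteq> u}"
proof (intro set_eqI)
  fix u
  have y: "y \<in> e" "y \<in> W"
    using assms unfolding free_vertex_def by blast+
  show "u \<in> indep_sets W E \<longleftrightarrow> u \<in>
    {u. u - {y} \<in> indep_sets (W - {y}) ((\<lambda>f. f - {y}) ` E)} \<union>
    {u. u - (e - {y}) \<in> indep_sets (W - e) ((\<lambda>f. f - (e - {y})) ` (E - {e})) \<and> e - {y} \<subseteq> u}"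
  proof (cases "e - {y} \<subseteq> u")
    case True
    then show ?thesis
      using indep_sets_free_vertex_shift_iff[OF assms(1) y(1) assms(3) True]
        indep_sets_link_not_subset[OF assms(1)] by simp blast
  next
    case False
    then show ?thesis
      using indep_sets_free_vertex_cone_iff[OF assms(2) y(2) False] by simp
  qed
qed

lemma indep_sets_free_vertex_split_disjoint:
  assumes "e \<in> E"
  shows "{u. u - {y} \<in> indep_sets W ((\<lambda>f. f - {y}) ` E)} \<inter>
    {u. u - (e - {y}) \<in> indep_sets W' E' \<and> e - {y} \<subseteq> u} = {}"
  using indep_sets_link_not_subset[OF assms] by blast

lemma indep_sets_isolated_vertices:
  assumes "V \<subseteq> X" and "\<forall>e\<in>E. e \<subseteq> V"
  shows "indep_sets X E = {u. u - (X - V) \<in> indep_sets V E}"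
proof (intro set_eqI)
  fix u
  have "u \<subseteq> X \<longleftrightarrow> u - (X - V) \<subseteq> V"
    using assms(1) by auto
  moreover have "e \<subseteq> u \<longleftrightarrow> e \<subseteq> u - (X - V)" if "e \<in> E" for e
    using assms(2) that by auto
  ultimately show "u \<in> indep_sets X E \<longleftrightarrow> u \<in> {u. u - (X - V) \<in> indep_sets V E}"
    unfolding mem_indep_sets mem_Collect_eq by simp
qed

section \<open>Interval partitions with small lower ends\<close>

text \<open>
  The bound is \<open>card a + k \<le> n\<close> rather than \<open>card a \<le> n - k\<close>: with truncated subtraction
  the latter would lose the information that no interval exists when \<open>k > n\<close>.
\<close>

definition codim_partition :: "'a set set \<Rightarrow> nat \<Rightarrow> nat \<Rightarrow> bool" where
  "codim_partition T n k \<longleftrightarrow>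
     (\<exists>Q. interval_partition T Q \<and> (\<forall>a b. (a, b) \<in> Q \<longrightarrow> card a + k \<le> n))"

lemma codim_partition_empty: "codim_partition {} n k"
  unfolding codim_partition_def using interval_partition_empty by blast

lemma codim_partition_Un:
  assumes "codim_partition T n k" and "codim_partition T' n k" and "T \<inter> T' = {}"
  shows "codim_partition (T \<union> T') n k"
  using assms interval_partition_Un unfolding codim_partition_def by (metis UnE)

lemma codim_partition_extend:
  assumes "codim_partition T n k" and "\<forall>s\<in>T. s \<inter> d = {}" and "c \<subseteq> d"
    and "n + card c + k' \<le> n' + k"
  shows "codim_partition {u. u - d \<in> T \<and> c \<subseteq> u} n' k'"
proof -
  obtain Q where Q: "interval_partition T Q" and bound: "\<And>a b. (a, b) \<in> Q \<Longrightarrow> card a + k \<le> n"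
    using assms(1) unfolding codim_partition_def by blast
  have "card (a \<union> c) + k' \<le> n'" if "(a, b) \<in> Q" for a b
    using bound[OF that] card_Un_le[of a c] assms(4) by linarith
  then show ?thesis
    using interval_partition_extend[OF Q assms(2,3)] unfolding codim_partition_def by fastforce
qed

lemma codim_partition_mono:
  assumes "codim_partition T n k" and "n + k' \<le> n' + k"
  shows "codim_partition T n' k'"
proof -
  obtain Q where Q: "interval_partition T Q" and bound: "\<And>a b. (a, b) \<in> Q \<Longrightarrow> card a + k \<le> n"
    using assms(1) unfolding codim_partition_def by blast
  have "card a + k' \<le> n'" if "(a, b) \<in> Q" for a b
    using bound[OF that] assms(2) by linarith
  then show ?thesis
    using Q unfolding codim_partition_def by blast
qed

abbreviation has_codim_partition :: "'a set \<Rightarrow> 'a set set \<Rightarrow> nat \<Rightarrow> bool" where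
  "has_codim_partition W E k \<equiv> codim_partition (indep_sets W E) (card W) k"

lemma has_codim_partition_empty_edge: "{} \<in> E \<Longrightarrow> has_codim_partition W E k"
  unfolding indep_sets_empty_edge by (rule codim_partition_empty)

lemma has_codim_partition_zero:
  assumes "finite W"
  shows "has_codim_partition W E 0"
  unfolding codim_partition_def
proof (intro exI conjI allI impI)
  show "interval_partition (indep_sets W E) ((\<lambda>s. (s, s)) ` indep_sets W E)"
    using assms by (intro interval_partition_singletons finite_indep_sets)
  show "card a + 0 \<le> card W" if "(a, b) \<in> (\<lambda>s. (s, s)) ` indep_sets W E" for a b
    using that assms by (auto simp: mem_indep_sets intro: card_mono)
qed

lemma has_codim_partition_vertex:
  assumes "finite W" and "y \<in> W"
    and "has_codim_partition (W - {y}) E k"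
    and "has_codim_partition (W - {y}) ((\<lambda>e. e - {y}) ` E) (Suc k)"
  shows "has_codim_partition W E (Suc k)"
proof -
  have card_W: "card W = Suc (card (W - {y}))"
    using card_Suc_Diff1[OF assms(1,2)] by simp
  have del: "codim_partition (indep_sets (W - {y}) E) (card W) (Suc k)"
    using card_W by (intro codim_partition_mono[OF assms(3)]) simp
  have link: "codim_partition {u. u - {y} \<in> indep_sets (W - {y}) ((\<lambda>e. e - {y}) ` E) \<and> {y} \<subseteq> u}
      (card W) (Suc k)"
    using assms(4) card_W by (intro codim_partition_extend) (auto simp: mem_indep_sets)
  show ?thesis
    unfolding indep_sets_vertex_split[OF assms(2), of E]
    by (rule codim_partition_Un[OF del link indep_sets_vertex_split_disjoint])
qed

lemma has_codim_partition_free_vertex: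
  assumes "finite W" and "e \<in> E" and y: "free_vertex E e y" and "e \<subseteq> W"
    and "has_codim_partition (W - {y}) ((\<lambda>f. f - {y}) ` E) k"
    and "has_codim_partition (W - e) ((\<lambda>f. f - (e - {y})) ` (E - {e})) k"
  shows "has_codim_partition W E (Suc k)"
proof -
  have "y \<in> e"
    using y unfolding free_vertex_def by blast
  have "finite e"
    using \<open>e \<subseteq> W\<close> \<open>finite W\<close> by (rule finite_subset)
  then have card_W: "card W = Suc (card (W - {y}))" "card W = card (W - e) + card e"
      and "card (e - {y}) = card e - 1" "card e \<ge> 1"
    using card_Suc_Diff1[OF assms(1)] card_Diff_subset[OF \<open>finite e\<close> \<open>e \<subseteq> W\<close>]
      card_mono[OF assms(1) \<open>e \<subseteq> W\<close>] card_gt_0_iff[of e] \<open>y \<in> e\<close> \<open>e \<subseteq> W\<close>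
    by auto
  have "codim_partition {u. u - {y} \<in> indep_sets (W - {y}) ((\<lambda>f. f - {y}) ` E) \<and> {} \<subseteq> u}
      (card W) (Suc k)"
    using assms(5) card_W by (intro codim_partition_extend) (auto simp: mem_indep_sets)
  then have cone: "codim_partition {u. u - {y} \<in> indep_sets (W - {y}) ((\<lambda>f. f - {y}) ` E)}
      (card W) (Suc k)"
    by simp
  have shift: "codim_partition
      {u. u - (e - {y}) \<in> indep_sets (W - e) ((\<lambda>f. f - (e - {y})) ` (E - {e})) \<and> e - {y} \<subseteq> u}
      (card W) (Suc k)"
    using assms(6) card_W \<open>card (e - {y}) = card e - 1\<close> \<open>card e \<ge> 1\<close>
    by (intro codim_partition_extend) (auto simp: mem_indep_sets)
  show ?thesis
    unfolding indep_sets_free_vertex_split[OF \<open>e \<in> E\<close> y \<open>e \<subseteq> W\<close>]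
    by (rule codim_partition_Un[OF cone shift indep_sets_free_vertex_split_disjoint[OF \<open>e \<in> E\<close>]])
qed

lemma has_codim_partition_isolated_vertices:
  assumes "finite X" and "V \<subseteq> X" and "\<forall>e\<in>E. e \<subseteq> V" and "has_codim_partition V E k"
  shows "has_codim_partition X E (k + card (X - V))"
proof -
  have "card X = card V + card (X - V)"
    using card_Diff_subset[OF finite_subset[OF assms(2,1)] assms(2)] card_mono[OF assms(1,2)] by simp
  then have "codim_partition {u. u - (X - V) \<in> indep_sets V E \<and> {} \<subseteq> u} (card X) (k + card (X - V))"
    using assms(4) by (intro codim_partition_extend) (auto simp: mem_indep_sets)
  then show ?thesis
    unfolding indep_sets_isolated_vertices[OF assms(2,3)] by simp
qed

lemma pairwise_disjnt_shrink_member: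
  assumes "pairwise disjnt M" and "finite M" and "g \<in> M" and "g' \<subseteq> g" and "g' \<noteq> {}"
  shows "pairwise disjnt (insert g' (M - {g}))" and "card (insert g' (M - {g})) = card M"
proof -
  show "pairwise disjnt (insert g' (M - {g}))"
    using assms(1,3,4) unfolding pairwise_def disjnt_def by blast
  have "g' \<notin> M - {g}"
    using pairwiseD[OF assms(1)] assms(3,4,5) unfolding disjnt_def by blast
  then show "card (insert g' (M - {g})) = card M"
    using assms(2,3) by (metis card_Suc_Diff1 card_insert_disjoint finite_Diff)
qed

text \<open>
  Split at a vertex \<open>y\<close> of a matching edge \<open>g\<close>: the deletion loses \<open>g\<close>, while the link
  keeps the matching with \<open>g\<close> shrunk to \<open>g - {y}\<close> (or contains the empty edge).
\<close>

lemma has_codim_partition_matching: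
  assumes "finite W" and "M \<subseteq> E" and "\<Union>M \<subseteq> W" and "pairwise disjnt M"
  shows "has_codim_partition W E (card M)"
  using assms
proof (induction "card W" arbitrary: W E M rule: less_induct)
  case less
  show ?case
  proof (cases "{} \<in> E \<or> M = {}")
    case True
    then show ?thesis
      using has_codim_partition_empty_edge has_codim_partition_zero[OF less.prems(1)] by auto
  next
    case False
    then obtain g where g: "g \<in> M"
      by blast
    then have "g \<noteq> {}"
      using False less.prems(2) by blast
    then obtain y where "y \<in> g"
      by blast
    have "finite M"
      using less.prems(1,3) by (meson Sup_le_iff finite_Pow_iff finite_subset subset_Pow_Union)
    have "y \<in> W" and smaller: "card (W - {y}) < card W"
      using g \<open>y \<in> g\<close> less.prems(1,3) by (auto intro: card_Diff1_less)
    have others: "y \<notin> f" if "f \<in> M - {g}" for f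
      using that g \<open>y \<in> g\<close> less.prems(4) unfolding pairwise_def disjnt_def by blast
    have card_M: "card M = Suc (card (M - {g}))"
      using card_Suc_Diff1[OF \<open>finite M\<close> g] by simp
    have del: "has_codim_partition (W - {y}) E (card (M - {g}))"
      using less.prems others by (intro less.hyps[OF smaller]) (auto intro: pairwise_subset)
    have link: "has_codim_partition (W - {y}) ((\<lambda>e. e - {y}) ` E) (card M)"
    proof (cases "g - {y} = {}")
      case True
      then have "{} \<in> (\<lambda>e. e - {y}) ` E"
        using g less.prems(2) by (metis image_eqI subsetD)
      then show ?thesis
        by (rule has_codim_partition_empty_edge)
    next
      case False
      let ?M' = "insert (g - {y}) (M - {g})"
      have "?M' \<subseteq> (\<lambda>e. e - {y}) ` E" and "\<Union>?M' \<subseteq> W - {y}"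
        using g others less.prems(2,3) by (auto simp: image_iff)
      then show ?thesis
        using less.hyps[OF smaller] less.prems(1) False
          pairwise_disjnt_shrink_member[OF less.prems(4) \<open>finite M\<close> g Diff_subset]
        by (metis finite_Diff)
    qed
    show ?thesis
      using has_codim_partition_vertex[OF less.prems(1) \<open>y \<in> W\<close> del] link card_M by simp
  qed
qed

section \<open>Edges with free vertices together with a matching\<close>

text \<open>
  The edges with a free vertex together with a matching of the other edges satisfy this condition,
  and unlike that description it is preserved by the recursion.
\<close>

definition free_packing :: "'a set set \<Rightarrow> 'a set set \<Rightarrow> bool" where
  "free_packing E F \<longleftrightarrow> F \<subseteq> E \<and>
     (\<forall>f\<in>F. \<forall>g\<in>F. f \<noteq> g \<longrightarrow> disjnt f g \<or> has_free_vertex E f \<or> has_free_vertex E g)"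

lemma free_vertex_antimono: "E' \<subseteq> E \<Longrightarrow> free_vertex E f p \<Longrightarrow> free_vertex E' f p"
  unfolding free_vertex_def by blast

lemma free_vertex_image_Diff:
  assumes "free_vertex E f p" and "p \<notin> c"
  shows "free_vertex ((\<lambda>h. h - c) ` E) (f - c) p"
  using assms unfolding free_vertex_def by blast

lemma free_vertex_unique_edge: "free_vertex E f p \<Longrightarrow> e \<in> E \<Longrightarrow> p \<in> e \<Longrightarrow> e = f"
  unfolding free_vertex_def by blast

lemma free_packing_pairwise_disjnt:
  assumes "free_packing E F" and "\<forall>f\<in>F. \<not> has_free_vertex E f"
  shows "pairwise disjnt F"
  using assms unfolding free_packing_def pairwise_def by blast

lemma free_packing_cone:
  assumes F: "free_packing E F" and "e \<in> F" and y: "free_vertex E e y"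
  shows "free_packing ((\<lambda>f. f - {y}) ` E) (F - {e})"
proof -
  have same: "f - {y} = f" if "f \<in> F - {e}" for f
    using that F free_vertex_unique_edge[OF y] unfolding free_packing_def by blast
  have "has_free_vertex ((\<lambda>f. f - {y}) ` E) f" if f: "f \<in> F - {e}" and "has_free_vertex E f" for f
  proof -
    obtain p where p: "free_vertex E f p"
      using \<open>has_free_vertex E f\<close> unfolding has_free_vertex_def by blast
    then have "p \<notin> {y}"
      using same[OF f] unfolding free_vertex_def by blast
    then show ?thesis
      using free_vertex_image_Diff[OF p] same[OF f] unfolding has_free_vertex_def by metis
  qed
  moreover have "F - {e} \<subseteq> (\<lambda>f. f - {y}) ` E"
  proof
    fix f assume f: "f \<in> F - {e}"
    then have "f \<in> E"
      using F unfolding free_packing_def by blast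
    then show "f \<in> (\<lambda>f. f - {y}) ` E"
      using same[OF f] by (metis image_eqI)
  qed
  ultimately show ?thesis
    using F unfolding free_packing_def by blast
qed

lemma Union_Diff_free_edge:
  assumes "free_vertex E e y" and "F \<subseteq> E"
  shows "\<Union>(F - {e}) \<subseteq> \<Union>F - {y}"
    and "\<Union>((\<lambda>f. f - (e - {y})) ` (F - {e})) \<subseteq> \<Union>F - e"
  using assms unfolding free_vertex_def by blast+

lemma inj_on_free_packing_shift:
  assumes F: "free_packing E F" and "e \<in> F" and y: "free_vertex E e y"
    and nonempty: "{} \<notin> (\<lambda>f. f - (e - {y})) ` (E - {e})"
  shows "inj_on (\<lambda>f. f - (e - {y})) (F - {e})"
proof (rule inj_onI, rule ccontr)
  have FE: "F \<subseteq> E"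
    using F unfolding free_packing_def by blast
  fix f g assume f: "f \<in> F - {e}" and g: "g \<in> F - {e}"
    and eq: "f - (e - {y}) = g - (e - {y})" and "f \<noteq> g"
  have outside: "p \<notin> e" if "h \<in> F - {e}" "free_vertex E h p" for h p
    using that free_vertex_unique_edge[of E h p e] \<open>e \<in> F\<close> FE by blast
  consider "disjnt f g" | "has_free_vertex E f" | "has_free_vertex E g"
    using F f g \<open>f \<noteq> g\<close> unfolding free_packing_def by blast
  then show False
  proof cases
    case 1
    then have "f - (e - {y}) = {}"
      using eq unfolding disjnt_def by blast
    then show False
      using nonempty f FE by blast
  next
    case 2
    then obtain p where "free_vertex E f p"
      unfolding has_free_vertex_def by blast
    then show False
      using outside[OF f] eq g FE \<open>f \<noteq> g\<close> unfolding free_vertex_def by blast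
  next
    case 3
    then obtain p where "free_vertex E g p"
      unfolding has_free_vertex_def by blast
    then show False
      using outside[OF g] eq f FE \<open>f \<noteq> g\<close> unfolding free_vertex_def by blast
  qed
qed

lemma free_packing_shift:
  assumes F: "free_packing E F" and "e \<in> F" and y: "free_vertex E e y"
  shows "free_packing ((\<lambda>f. f - (e - {y})) ` (E - {e})) ((\<lambda>f. f - (e - {y})) ` (F - {e}))"
  unfolding free_packing_def
proof (intro conjI ballI impI)
  have FE: "F \<subseteq> E"
    using F unfolding free_packing_def by blast
  have transfer: "has_free_vertex ((\<lambda>f. f - (e - {y})) ` (E - {e})) (f - (e - {y}))"
    if f: "f \<in> F - {e}" and "has_free_vertex E f" for f
  proof -
    obtain p where p: "free_vertex E f p"
      using \<open>has_free_vertex E f\<close> unfolding has_free_vertex_def by blast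
    have "p \<notin> e - {y}"
      using free_vertex_unique_edge[of E f p e] p f \<open>e \<in> F\<close> FE by blast
    moreover have "free_vertex (E - {e}) f p"
      using p by (rule free_vertex_antimono[rotated]) blast
    ultimately have "free_vertex ((\<lambda>f. f - (e - {y})) ` (E - {e})) (f - (e - {y})) p"
      by (intro free_vertex_image_Diff)
    then show ?thesis
      unfolding has_free_vertex_def by blast
  qed
  show "(\<lambda>f. f - (e - {y})) ` (F - {e}) \<subseteq> (\<lambda>f. f - (e - {y})) ` (E - {e})"
    using FE by blast
  fix f' g' assume "f' \<in> (\<lambda>f. f - (e - {y})) ` (F - {e})" "g' \<in> (\<lambda>f. f - (e - {y})) ` (F - {e})"
    and "f' \<noteq> g'"
  then obtain f g where f: "f \<in> F - {e}" "f' = f - (e - {y})" and g: "g \<in> F - {e}" "g' = g - (e - {y})"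
    by blast
  then consider "disjnt f g" | "has_free_vertex E f" | "has_free_vertex E g"
    using F \<open>f' \<noteq> g'\<close> unfolding free_packing_def by blast
  then show "disjnt f' g' \<or> has_free_vertex ((\<lambda>f. f - (e - {y})) ` (E - {e})) f' \<or>
      has_free_vertex ((\<lambda>f. f - (e - {y})) ` (E - {e})) g'"
    by cases (use f g transfer in \<open>auto simp: disjnt_def\<close>)
qed

lemma has_codim_partition_free_packing:
  assumes "finite W" and "free_packing E F" and "\<Union>F \<subseteq> W"
  shows "has_codim_partition W E (card F)"
  using assms
proof (induction "card W" arbitrary: W E F rule: less_induct)
  case less
  show ?case
  proof (cases "\<exists>e\<in>F. has_free_vertex E e")
    case False
    then have "pairwise disjnt F"
      using free_packing_pairwise_disjnt less.prems(2) by blast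
    moreover have "F \<subseteq> E"
      using less.prems(2) unfolding free_packing_def by blast
    ultimately show ?thesis
      using has_codim_partition_matching less.prems(1,3) by blast
  next
    case True
    then obtain e y where e: "e \<in> F" and y: "free_vertex E e y"
      unfolding has_free_vertex_def by blast
    have "F \<subseteq> E"
      using less.prems(2) unfolding free_packing_def by blast
    have "e \<in> E" "e \<subseteq> W" "y \<in> e"
      using e y \<open>F \<subseteq> E\<close> less.prems(3) unfolding free_vertex_def by auto
    have "finite F"
      using less.prems(1,3) by (meson Sup_le_iff finite_Pow_iff finite_subset subset_Pow_Union)
    have card_F: "card F = Suc (card (F - {e}))"
      using card_Suc_Diff1[OF \<open>finite F\<close> e] by simp
    have cone: "has_codim_partition (W - {y}) ((\<lambda>f. f - {y}) ` E) (card (F - {e}))"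
    proof (rule less.hyps)
      show "card (W - {y}) < card W"
        using less.prems(1) \<open>y \<in> e\<close> \<open>e \<subseteq> W\<close> by (auto intro: card_Diff1_less)
      show "\<Union>(F - {e}) \<subseteq> W - {y}"
        using Union_Diff_free_edge(1)[OF y \<open>F \<subseteq> E\<close>] less.prems(3) by blast
      show "finite (W - {y})"
        using less.prems(1) by blast
      show "free_packing ((\<lambda>f. f - {y}) ` E) (F - {e})"
        using free_packing_cone[OF less.prems(2) e y] .
    qed
    have shift: "has_codim_partition (W - e) ((\<lambda>f. f - (e - {y})) ` (E - {e})) (card (F - {e}))"
    proof (cases "{} \<in> (\<lambda>f. f - (e - {y})) ` (E - {e})")
      case True
      then show ?thesis
        by (rule has_codim_partition_empty_edge)
    next
      case False
      have "W - e \<subset> W"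
        using \<open>y \<in> e\<close> \<open>e \<subseteq> W\<close> by blast
      then have "card (W - e) < card W"
        by (rule psubset_card_mono[OF less.prems(1)])
      moreover have "\<Union>((\<lambda>f. f - (e - {y})) ` (F - {e})) \<subseteq> W - e"
        using Union_Diff_free_edge(2)[OF y \<open>F \<subseteq> E\<close>] less.prems(3) by blast
      ultimately show ?thesis
        using less.hyps less.prems(1) free_packing_shift[OF less.prems(2) e y]
          card_image[OF inj_on_free_packing_shift[OF less.prems(2) e y False]]
        by (metis finite_Diff)
    qed
    show ?thesis
      using has_codim_partition_free_vertex[OF less.prems(1) \<open>e \<in> E\<close> y \<open>e \<subseteq> W\<close> cone shift] card_F
      by simp
  qed
qed

section \<open>Stanley decompositions\<close>

lemma stanley_piece_iff:
  assumes "u \<subseteq> Z"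
  shows "m \<in> stanley_piece (u, Z) \<longleftrightarrow> {x. m x \<noteq> 0} \<in> {u..Z}"
proof
  assume "m \<in> stanley_piece (u, Z)"
  then obtain v where "v \<in> monomials Z" and m: "m = (\<lambda>x. (if x \<in> u then 1 else 0) + v x)"
    unfolding stanley_piece_def by auto
  then show "{x. m x \<noteq> 0} \<in> {u..Z}"
    using assms unfolding monomials_def by auto
next
  assume supp: "{x. m x \<noteq> 0} \<in> {u..Z}"
  define v where "v x = m x - (if x \<in> u then 1 else 0)" for x
  have "v \<in> monomials Z"
    using supp unfolding monomials_def v_def by auto
  moreover have "m = (\<lambda>x. (if x \<in> u then 1 else 0) + v x)"
    using supp unfolding v_def by fastforce
  ultimately show "m \<in> stanley_piece (u, Z)"
    unfolding stanley_piece_def by auto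
qed

lemma std_monomials_iff: "m \<in> std_monomials X E \<longleftrightarrow> {x. m x \<noteq> 0} \<in> indep_sets X E"
  unfolding std_monomials_def monomials_def in_edge_ideal_def mem_indep_sets by (auto simp: subset_iff)

lemma stanley_decomposition_of_interval_partition:
  assumes Q: "interval_partition (indep_sets X E) Q"
  obtains D where "stanley_decomposition X E D" and "set D = Q"
proof -
  obtain D where D: "set D = Q" "distinct D"
    using finite_distinct_list[OF interval_partition_finite[OF Q]] by blast
  have piece: "m \<in> stanley_piece (D ! i) \<longleftrightarrow> {x. m x \<noteq> 0} \<in> {fst (D ! i)..snd (D ! i)}"
    if "i < length D" for i m
  proof -
    obtain u Z where uZ: "D ! i = (u, Z)"
      by (cases "D ! i")
    then have "(u, Z) \<in> Q"
      using D(1) nth_mem[OF that] by metis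
    then show ?thesis
      using stanley_piece_iff[OF interval_partition_le[OF Q]] uZ by simp
  qed
  have "stanley_decomposition X E D"
    unfolding stanley_decomposition_def
  proof (intro conjI allI impI ballI)
    show "case p of (u, Z) \<Rightarrow> u \<subseteq> Z \<and> Z \<subseteq> X" if "p \<in> set D" for p
    proof (cases p)
      case (Pair u Z)
      then have "u \<subseteq> Z" "Z \<in> indep_sets X E"
        using that D(1) interval_partition_le[OF Q] interval_partition_upper_mem[OF Q] by auto
      then show ?thesis
        using Pair unfolding mem_indep_sets by simp
    qed
    show "stanley_piece (D ! i) \<subseteq> std_monomials X E" if "i < length D" for i
    proof
      fix m assume "m \<in> stanley_piece (D ! i)"
      moreover have "(fst (D ! i), snd (D ! i)) \<in> Q"
        using D(1) nth_mem[OF that] by simp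
      ultimately show "m \<in> std_monomials X E"
        using piece[OF that] interval_partition_subset[OF Q] unfolding std_monomials_iff by blast
    qed
    fix m assume "m \<in> std_monomials X E"
    then obtain a b where ab: "(a, b) \<in> Q" "{x. m x \<noteq> 0} \<in> {a..b}"
      using interval_partition_cover[OF Q] unfolding std_monomials_iff by blast
    then obtain i where i: "i < length D" "D ! i = (a, b)"
      using D(1) by (metis in_set_conv_nth)
    show "\<exists>!i. i < length D \<and> m \<in> stanley_piece (D ! i)"
    proof (rule ex1I[of _ i])
      show "i < length D \<and> m \<in> stanley_piece (D ! i)"
        using i ab piece[OF i(1)] by simp
      fix j assume j: "j < length D \<and> m \<in> stanley_piece (D ! j)"
      then have "(fst (D ! j), snd (D ! j)) \<in> Q" "{x. m x \<noteq> 0} \<in> {fst (D ! j)..snd (D ! j)}"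
        using D(1) piece by auto
      then have "D ! j = D ! i"
        using interval_partition_unique[OF Q _ ab(1)] ab(2) i(2) by (metis prod.collapse)
      then show "j = i"
        using D(2) i(1) j nth_eq_iff_index_eq by blast
    qed
  qed
  then show ?thesis
    using that D(1) by blast
qed

lemma sreg_add_codim_le:
  assumes "finite X" and "{} \<notin> E" and "has_codim_partition X E k"
  shows "sreg X E + k \<le> card X"
proof -
  obtain Q where Q: "interval_partition (indep_sets X E) Q"
    and bound: "\<And>a b. (a, b) \<in> Q \<Longrightarrow> card a + k \<le> card X"
    using assms(3) unfolding codim_partition_def by blast
  obtain D where D: "stanley_decomposition X E D" "set D = Q"
    using stanley_decomposition_of_interval_partition[OF Q] .
  have "{} \<in> indep_sets X E"
    using assms(2) unfolding mem_indep_sets by auto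
  then obtain a b where "(a, b) \<in> Q"
    using interval_partition_cover[OF Q] by blast
  then have "k \<le> card X"
    using bound by fastforce
  moreover have "x \<le> card X - k" if "x \<in> insert 0 ((card \<circ> fst) ` set D)" for x
    using that D(2) bound by fastforce
  then have "stanley_reg_of D \<le> card X - k"
    unfolding stanley_reg_of_def by simp
  moreover have "sreg X E \<le> stanley_reg_of D"
    unfolding sreg_def by (rule Least_le) (use D(1) in blast)
  ultimately show ?thesis
    by linarith
qed

lemma matching_number_attained:
  assumes "finite E"
  obtains M where "matching E M" and "card M = matching_number E"
proof -
  have "{card M | M. matching E M} \<subseteq> card ` Pow E"
    unfolding matching_def by blast
  then have "finite {card M | M. matching E M}"
    by (rule finite_subset) (use assms in simp)
  moreover have "matching E {}"
    unfolding matching_def by blast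
  ultimately have "matching_number E \<in> {card M | M. matching E M}"
    unfolding matching_number_def by (intro Max_in) auto
  then obtain M where "matching E M" and "card M = matching_number E"
    by auto
  then show ?thesis
    by (rule that)
qed

lemma clutterD:
  assumes "clutter V E"
  shows "finite V" and "\<forall>e\<in>E. e \<subseteq> V" and "{} \<notin> E" and "finite E"
proof -
  show "finite V" and "\<forall>e\<in>E. e \<subseteq> V" and "{} \<notin> E"
    using assms unfolding clutter_def by auto
  then show "finite E"
    by (meson Pow_iff finite_Pow_iff finite_subset subsetI)
qed

lemma free_packing_remove_free_edges:
  assumes "matching (remove_free_edges E) M"
  shows "free_packing E ((E - remove_free_edges E) \<union> M)"
  using assms unfolding free_packing_def matching_def remove_free_edges_def disjnt_def by blast

lemma has_codim_partition_clutter: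
  assumes "clutter V E" and M: "matching (remove_free_edges E) M"
  shows "has_codim_partition V E (card E - card (remove_free_edges E) + card M)"
proof -
  let ?E' = "remove_free_edges E"
  have "?E' \<subseteq> E" and "M \<subseteq> ?E'"
    using M unfolding remove_free_edges_def matching_def by auto
  moreover have "finite E"
    using clutterD(4)[OF assms(1)] .
  ultimately have "card ((E - ?E') \<union> M) = card E - card ?E' + card M"
    using finite_subset[of M E] finite_subset[of ?E' E]
    by (subst card_Un_disjoint) (auto simp: card_Diff_subset)
  moreover have "\<Union>((E - ?E') \<union> M) \<subseteq> V"
    using clutterD(2)[OF assms(1)] \<open>?E' \<subseteq> E\<close> \<open>M \<subseteq> ?E'\<close> by blast
  ultimately show ?thesis
    using has_codim_partition_free_packing[OF clutterD(1)[OF assms(1)] free_packing_remove_free_edges[OF M]]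
    by simp
qed

theorem theorem4p1:
  fixes X V :: "'a set" and E :: "'a set set"
  assumes "finite X" and "V \<subseteq> X" and "clutter V E"
  shows "int (sreg X E) \<le> int (card V) - int (card E) + int (card (remove_free_edges E))
           - int (matching_number (remove_free_edges E))"
proof -
  let ?E' = "remove_free_edges E"
  obtain M where M: "matching ?E' M" "card M = matching_number ?E'"
    using matching_number_attained finite_subset[of ?E' E] clutterD(4)[OF assms(3)]
    unfolding remove_free_edges_def by blast
  have "has_codim_partition X E (card E - card ?E' + card M + card (X - V))"
    using has_codim_partition_isolated_vertices[OF assms(1,2) clutterD(2)[OF assms(3)]]
      has_codim_partition_clutter[OF assms(3) M(1)] by blast
  then have "sreg X E + (card E - card ?E' + card M + card (X - V)) \<le> card X"
    by (rule sreg_add_codim_le[OF assms(1) clutterD(3)[OF assms(3)]])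
  moreover have "card X = card V + card (X - V)" and "card ?E' \<le> card E"
    using card_Diff_subset[OF clutterD(1)[OF assms(3)] assms(2)] card_mono[OF assms(1,2)]
      card_mono[OF clutterD(4)[OF assms(3)], of ?E'] unfolding remove_free_edges_def by auto
  ultimately show ?thesis
    using M(2) by linarith
qed

end
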